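(* Let $(L_1,[\cdot,\cdot]_1,\alpha_1),\dots,(L_n,[\cdot,\cdot]_n,\alpha_n)$ be Hom-Lie algebras over a field $F$ and let $\mu_i$ be a fuzzy Hom-Lie subalgebra of $L_i$ for $i=1,\dots,n$. Then $\mu_1\oplus\cdots\oplus\mu_n$ is a fuzzy Hom-Lie subalgebra of the Hom-Lie algebra $(L_1\oplus\cdots\oplus L_n,[\cdot,\cdot],\alpha_1+\cdots+\alpha_n)$.
   Context: A Hom-Lie algebra over $F$ is a triple $(L,[\cdot,\cdot],\alpha)$ with $L$ an $F$-vector space, $\alpha:L\to L$ linear and $[\cdot,\cdot]$ bilinear, skew-symmetric, satisfying $[\alpha(x),[y,z]]+[\alpha(y),[z,x]]+[\alpha(z),[x,y]]=0$. The direct sum $L_1\oplus\cdots\oplus L_n$ is a Hom-Lie algebra with componentwise bracket $[(x_1,\dots,x_n),(y_1,\dots,y_n)]=([x_1,y_1]_1,\dots,[x_n,y_n]_n)$ and twisting map $(\alpha_1+\cdots+\alpha_n)(x_1,\dots,x_n)=(\alpha_1(x_1),\dots,\alpha_n(x_n))$. For fuzzy subsets $\mu_i:L_i\to[0,1]$, $(\mu_1\oplus\cdots\oplus\mu_n)(x_1,\dots,x_n)=\mu_1(x_1)\wedge\cdots\wedge\mu_n(x_n)$, where $\wedge$ is minimum. A fuzzy subset $\mu$ of a Hom-Lie algebra $L$ is a fuzzy Hom-Lie subalgebra if for all $x,y\in L$, $c\in F$: $\mu(x+y)\ge\mu(x)\wedge\mu(y)$, $\mu(cx)\ge\mu(x)$,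 $\mu([x,y])\ge\mu(x)\wedge\mu(y)$, $\mu(\alpha(x))\ge\mu(x)$. *)

theory Defs
  imports Complex_Main "HOL-Library.FuncSet"
begin

definition vector_space_on ::
  "'v set \<Rightarrow> ('v \<Rightarrow> 'v \<Rightarrow> 'v) \<Rightarrow> ('f::field \<Rightarrow> 'v \<Rightarrow> 'v) \<Rightarrow> 'v \<Rightarrow> bool" where
  "vector_space_on V add sm zero \<longleftrightarrow>
     zero \<in> V \<and>
     (\<forall>x\<in>V. \<forall>y\<in>V. add x y \<in> V) \<and>
     (\<forall>c. \<forall>x\<in>V. sm c x \<in> V) \<and>
     (\<forall>x\<in>V. \<forall>y\<in>V. \<forall>z\<in>V. add (add x y) z = add x (add y z)) \<and>
     (\<forall>x\<in>V. \<forall>y\<in>V. add x y = add y x) \<and>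
     (\<forall>x\<in>V. add zero x = x) \<and>
     (\<forall>x\<in>V. \<exists>y\<in>V. add x y = zero) \<and>
     (\<forall>a b. \<forall>x\<in>V. sm a (sm b x) = sm (a * b) x) \<and>
     (\<forall>x\<in>V. sm 1 x = x) \<and>
     (\<forall>a. \<forall>x\<in>V. \<forall>y\<in>V. sm a (add x y) = add (sm a x) (sm a y)) \<and>
     (\<forall>a b. \<forall>x\<in>V. sm (a + b) x = add (sm a x) (sm b x))"

definition hom_lie_algebra ::
  "'v set \<Rightarrow> ('v \<Rightarrow> 'v \<Rightarrow> 'v) \<Rightarrow> ('f::field \<Rightarrow> 'v \<Rightarrow> 'v) \<Rightarrow> 'v
     \<Rightarrow> ('v \<Rightarrow> 'v \<Rightarrow> 'v) \<Rightarrow> ('v \<Rightarrow> 'v) \<Rightarrow> bool" where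
  "hom_lie_algebra L add sm zero br \<alpha> \<longleftrightarrow>
     vector_space_on L add sm zero \<and>
     (\<forall>x\<in>L. \<alpha> x \<in> L) \<and>
     (\<forall>x\<in>L. \<forall>y\<in>L. \<alpha> (add x y) = add (\<alpha> x) (\<alpha> y)) \<and>
     (\<forall>c. \<forall>x\<in>L. \<alpha> (sm c x) = sm c (\<alpha> x)) \<and>
     (\<forall>x\<in>L. \<forall>y\<in>L. br x y \<in> L) \<and>
     (\<forall>x\<in>L. \<forall>y\<in>L. \<forall>z\<in>L. br (add x y) z = add (br x z) (br y z)) \<and>
     (\<forall>c. \<forall>x\<in>L. \<forall>y\<in>L. br (sm c x) y = sm c (br x y)) \<and>
     (\<forall>x\<in>L. \<forall>y\<in>L. \<forall>z\<in>L. br x (add y z) = add (br x y) (br x z)) \<and>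
     (\<forall>c. \<forall>x\<in>L. \<forall>y\<in>L. br x (sm c y) = sm c (br x y)) \<and>
     (\<forall>x\<in>L. \<forall>y\<in>L. add (br x y) (br y x) = zero) \<and>
     (\<forall>x\<in>L. \<forall>y\<in>L. \<forall>z\<in>L.
        add (add (br (\<alpha> x) (br y z)) (br (\<alpha> y) (br z x))) (br (\<alpha> z) (br x y)) = zero)"

definition fuzzy_hom_lie_subalgebra ::
  "'v set \<Rightarrow> ('v \<Rightarrow> 'v \<Rightarrow> 'v) \<Rightarrow> ('f::field \<Rightarrow> 'v \<Rightarrow> 'v)
     \<Rightarrow> ('v \<Rightarrow> 'v \<Rightarrow> 'v) \<Rightarrow> ('v \<Rightarrow> 'v) \<Rightarrow> ('v \<Rightarrow> real) \<Rightarrow> bool" where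
  "fuzzy_hom_lie_subalgebra L add sm br \<alpha> \<mu> \<longleftrightarrow>
     (\<forall>x\<in>L. 0 \<le> \<mu> x \<and> \<mu> x \<le> 1) \<and>
     (\<forall>x\<in>L. \<forall>y\<in>L. \<mu> (add x y) \<ge> min (\<mu> x) (\<mu> y)) \<and>
     (\<forall>c. \<forall>x\<in>L. \<mu> (sm c x) \<ge> \<mu> x) \<and>
     (\<forall>x\<in>L. \<forall>y\<in>L. \<mu> (br x y) \<ge> min (\<mu> x) (\<mu> y)) \<and>
     (\<forall>x\<in>L. \<mu> (\<alpha> x) \<ge> \<mu> x)"

text \<open>Direct sum L_0 (+) ... (+) L_{n-1}: tuples as extensional functions on {..<n}.\<close>
definition dsum_carrier :: "nat \<Rightarrow> (nat \<Rightarrow> 'v set) \<Rightarrow> (nat \<Rightarrow> 'v) set" where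
  "dsum_carrier n L = PiE {..<n} L"

definition dsum_op2 :: "nat \<Rightarrow> (nat \<Rightarrow> 'v \<Rightarrow> 'v \<Rightarrow> 'v) \<Rightarrow> (nat \<Rightarrow> 'v) \<Rightarrow> (nat \<Rightarrow> 'v) \<Rightarrow> (nat \<Rightarrow> 'v)" where
  "dsum_op2 n f x y = restrict (\<lambda>i. f i (x i) (y i)) {..<n}"

definition dsum_smult :: "nat \<Rightarrow> (nat \<Rightarrow> 'f \<Rightarrow> 'v \<Rightarrow> 'v) \<Rightarrow> 'f \<Rightarrow> (nat \<Rightarrow> 'v) \<Rightarrow> (nat \<Rightarrow> 'v)" where
  "dsum_smult n s c x = restrict (\<lambda>i. s i c (x i)) {..<n}"

definition dsum_zero :: "nat \<Rightarrow> (nat \<Rightarrow> 'v) \<Rightarrow> (nat \<Rightarrow> 'v)" where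
  "dsum_zero n z = restrict z {..<n}"

definition dsum_map :: "nat \<Rightarrow> (nat \<Rightarrow> 'v \<Rightarrow> 'v) \<Rightarrow> (nat \<Rightarrow> 'v) \<Rightarrow> (nat \<Rightarrow> 'v)" where
  "dsum_map n \<alpha> x = restrict (\<lambda>i. \<alpha> i (x i)) {..<n}"

definition fuzzy_dsum :: "nat \<Rightarrow> (nat \<Rightarrow> 'v \<Rightarrow> real) \<Rightarrow> (nat \<Rightarrow> 'v) \<Rightarrow> real" where
  "fuzzy_dsum n \<mu> x = Min ((\<lambda>i. \<mu> i (x i)) ` {..<n})"

end

theory Submission
  imports Defs
begin

text \<open>Every axiom of a Hom-Lie algebra is a closure condition or an identity, and on the direct
  sum both are checked coordinatewise; additive inverses are chosen coordinatewise. On the fuzzy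
  side, the minimum over the coordinates is the greatest lower bound of the coordinate values, so
  each defining inequality of the direct sum follows from the corresponding inequality in every
  coordinate. Only here is \<open>n \<ge> 1\<close> needed, for the minimum of a nonempty set.\<close>

lemma dsum_carrier_iff:
  "x \<in> dsum_carrier n L \<longleftrightarrow> (\<forall>i<n. x i \<in> L i) \<and> (\<forall>i\<ge>n. x i = undefined)"
  unfolding dsum_carrier_def PiE_def extensional_def by auto

lemma dsum_op2_apply [simp]: "dsum_op2 n f x y i = (if i < n then f i (x i) (y i) else undefined)"
  by (simp add: dsum_op2_def)

lemma dsum_smult_apply [simp]: "dsum_smult n s c x i = (if i < n then s i c (x i) else undefined)"
  by (simp add: dsum_smult_def)

lemma dsum_zero_apply [simp]: "dsum_zero n z i = (if i < n then z i else undefined)"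
  by (simp add: dsum_zero_def)

lemma dsum_map_apply [simp]: "dsum_map n f x i = (if i < n then f i (x i) else undefined)"
  by (simp add: dsum_map_def)

lemma dsum_carrier_choice:
  assumes "\<And>i. i < n \<Longrightarrow> \<exists>y\<in>L i. P i y"
  shows "\<exists>y\<in>dsum_carrier n L. \<forall>i<n. P i (y i)"
proof -
  from assms obtain f where "\<And>i. i < n \<Longrightarrow> f i \<in> L i \<and> P i (f i)" by metis
  then show ?thesis
    by (intro bexI[of _ "restrict f {..<n}"]) (auto simp: dsum_carrier_iff)
qed

lemma vector_space_on_dsum:
  assumes "\<And>i. i < n \<Longrightarrow> vector_space_on (L i) (add i) (sm i) (zero i)"
  shows "vector_space_on (dsum_carrier n L) (dsum_op2 n add) (dsum_smult n sm) (dsum_zero n zero)"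
proof -
  have V: "\<forall>i<n. vector_space_on (L i) (add i) (sm i) (zero i)" using assms by blast
  show ?thesis
    unfolding vector_space_on_def
  proof (intro conjI ballI allI)
    fix x assume x: "x \<in> dsum_carrier n L"
    have "\<exists>y\<in>dsum_carrier n L. \<forall>i<n. add i (x i) (y i) = zero i"
      using V x unfolding vector_space_on_def dsum_carrier_iff by (intro dsum_carrier_choice) blast
    then obtain y where y: "y \<in> dsum_carrier n L" and "\<forall>i<n. add i (x i) (y i) = zero i" ..
    then have "dsum_op2 n add x y = dsum_zero n zero" by (simp add: fun_eq_iff)
    with y show "\<exists>y\<in>dsum_carrier n L. dsum_op2 n add x y = dsum_zero n zero" by blast
  qed (use V in \<open>auto simp: vector_space_on_def dsum_carrier_iff fun_eq_iff\<close>)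
qed

lemma hom_lie_algebra_dsum:
  assumes "\<And>i. i < n \<Longrightarrow> hom_lie_algebra (L i) (add i) (sm i) (zero i) (br i) (\<alpha> i)"
  shows "hom_lie_algebra (dsum_carrier n L) (dsum_op2 n add) (dsum_smult n sm)
           (dsum_zero n zero) (dsum_op2 n br) (dsum_map n \<alpha>)"
proof -
  have H: "\<forall>i<n. hom_lie_algebra (L i) (add i) (sm i) (zero i) (br i) (\<alpha> i)"
    using assms by blast
  show ?thesis
    unfolding hom_lie_algebra_def
  proof (intro conjI ballI allI)
    show "vector_space_on (dsum_carrier n L) (dsum_op2 n add) (dsum_smult n sm) (dsum_zero n zero)"
      using assms by (intro vector_space_on_dsum) (simp add: hom_lie_algebra_def)
  qed (use H in \<open>auto simp: hom_lie_algebra_def dsum_carrier_iff fun_eq_iff\<close>)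
qed

lemma fuzzy_dsum_le:
  assumes "i < n"
  shows "fuzzy_dsum n \<mu> x \<le> \<mu> i (x i)"
  unfolding fuzzy_dsum_def using assms by (intro Min_le) auto

lemma fuzzy_dsum_greatest:
  assumes "n > 0" and "\<And>i. i < n \<Longrightarrow> c \<le> \<mu> i (x i)"
  shows "c \<le> fuzzy_dsum n \<mu> x"
  unfolding fuzzy_dsum_def using assms by (subst Min_ge_iff) auto

lemma fuzzy_dsum_min_le:
  assumes "i < n"
  shows "min (fuzzy_dsum n \<mu> x) (fuzzy_dsum n \<mu> y) \<le> min (\<mu> i (x i)) (\<mu> i (y i))"
  using assms by (intro min.mono fuzzy_dsum_le)

lemma fuzzy_hom_lie_subalgebra_dsum:
  assumes "n > 0"
    and "\<And>i. i < n \<Longrightarrow> fuzzy_hom_lie_subalgebra (L i) (add i) (sm i) (br i) (\<alpha> i) (\<mu> i)"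
  shows "fuzzy_hom_lie_subalgebra (dsum_carrier n L) (dsum_op2 n add) (dsum_smult n sm)
           (dsum_op2 n br) (dsum_map n \<alpha>) (fuzzy_dsum n \<mu>)"
proof -
  have F: "\<forall>i<n. fuzzy_hom_lie_subalgebra (L i) (add i) (sm i) (br i) (\<alpha> i) (\<mu> i)"
    using assms(2) by blast
  show ?thesis
    unfolding fuzzy_hom_lie_subalgebra_def
  proof (intro conjI ballI allI; (intro fuzzy_dsum_greatest[OF \<open>n > 0\<close>])?)
    fix x assume "x \<in> dsum_carrier n L"
    with F \<open>n > 0\<close> have "\<mu> 0 (x 0) \<le> 1"
      by (auto simp: fuzzy_hom_lie_subalgebra_def dsum_carrier_iff)
    with fuzzy_dsum_le[OF \<open>n > 0\<close>] show "fuzzy_dsum n \<mu> x \<le> 1"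
      by (rule order_trans)
  qed (use F in \<open>auto simp: fuzzy_hom_lie_subalgebra_def dsum_carrier_iff
         intro: order_trans[OF fuzzy_dsum_le] order_trans[OF fuzzy_dsum_min_le]\<close>)
qed

theorem theorem5p1:
  fixes n :: nat
    and L :: "nat \<Rightarrow> 'v set"
    and add :: "nat \<Rightarrow> 'v \<Rightarrow> 'v \<Rightarrow> 'v"
    and sm :: "nat \<Rightarrow> 'f::field \<Rightarrow> 'v \<Rightarrow> 'v"
    and zero :: "nat \<Rightarrow> 'v"
    and br :: "nat \<Rightarrow> 'v \<Rightarrow> 'v \<Rightarrow> 'v"
    and \<alpha> :: "nat \<Rightarrow> 'v \<Rightarrow> 'v"
    and \<mu> :: "nat \<Rightarrow> 'v \<Rightarrow> real"
  assumes "n \<ge> 1"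
    and "\<And>i. i < n \<Longrightarrow> hom_lie_algebra (L i) (add i) (sm i) (zero i) (br i) (\<alpha> i)"
    and "\<And>i. i < n \<Longrightarrow> fuzzy_hom_lie_subalgebra (L i) (add i) (sm i) (br i) (\<alpha> i) (\<mu> i)"
  shows "hom_lie_algebra (dsum_carrier n L) (dsum_op2 n add) (dsum_smult n sm)
           (dsum_zero n zero) (dsum_op2 n br) (dsum_map n \<alpha>)
       \<and> fuzzy_hom_lie_subalgebra (dsum_carrier n L) (dsum_op2 n add) (dsum_smult n sm)
           (dsum_op2 n br) (dsum_map n \<alpha>) (fuzzy_dsum n \<mu>)"
proof
  show "hom_lie_algebra (dsum_carrier n L) (dsum_op2 n add) (dsum_smult n sm)
          (dsum_zero n zero) (dsum_op2 n br) (dsum_map n \<alpha>)"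
    using assms(2) by (rule hom_lie_algebra_dsum)
  show "fuzzy_hom_lie_subalgebra (dsum_carrier n L) (dsum_op2 n add) (dsum_smult n sm)
          (dsum_op2 n br) (dsum_map n \<alpha>) (fuzzy_dsum n \<mu>)"
    using assms(1,3) by (intro fuzzy_hom_lie_subalgebra_dsum) auto
qed

end
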